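(* Let $p$ be an odd prime, $q\in\mathbb{C}_p$ with $|q-1|_p<1$, $\alpha\in\mathbb{N}\cup\{0\}$, $h\in\mathbb{N}$. Let $s\in\mathbb{N}$ with $s\ge2$ and let $n_1,\dots,n_s,k$ be nonnegative integers with $\sum_{l=1}^s n_l>sk$. Then \[ \sum_{l=0}^{n_1+\cdots+n_s-sk}\binom{\sum_{d=1}^s(n_d-k)}{l}(-1)^l\frac{\widetilde{G}_{l+sk+1,q}^{(\alpha,h)}}{l+sk+1}=\begin{cases}[2]_q+q^{h+1}\dfrac{\widetilde{G}_{n_1+\cdots+n_s+1,q^{-1}}^{(\alpha,h)}}{n_1+\cdots+n_s+1} & \text{if } k=0,\\[2mm] \displaystyle\sum_{l=0}^{sk}\binom{sk}{l}(-1)^{sk+l}\Big\{[2]_q+q^{h+1}\frac{\widetilde{G}_{n_1+\cdots+n_s-l+1,q^{-1}}^{(\alpha,h)}}{n_1+\cdots+n_s-l+1}\Big\} & \text{if } k\neq 0.\end{cases} \]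
   Context: For $x\in\mathbb{Z}_p$ write $[x]_q=\frac{1-q^x}{1-q}$, and $[2]_q=1+q$. For a uniformly differentiable $f:\mathbb{Z}_p\to\mathbb{C}_p$, the fermionic $p$-adic $q$-integral is $\int_{\mathbb{Z}_p}f(\xi)\,d\mu_{-q}(\xi)=\lim_{N\to\infty}\frac{1}{[p^N]_{-q}}\sum_{\xi=0}^{p^N-1}f(\xi)(-q)^{\xi}$, with $[p^N]_{-q}=\frac{1+q^{p^N}}{1+q}$. The $(h,q)$-Genocchi polynomials with weight $\alpha$ are defined for $n\ge0$, $x\in\mathbb{Z}_p$ by $\frac{\widetilde{G}_{n+1,q}^{(\alpha,h)}(x)}{n+1}=\int_{\mathbb{Z}_p}q^{(h-1)\xi}[x+\xi]_{q^{\alpha}}^n\,d\mu_{-q}(\xi)$, and the numbers are $\widetilde{G}_{n,q}^{(\alpha,h)}=\widetilde{G}_{n,q}^{(\alpha,h)}(0)$. The numbers $\widetilde{G}_{n,q^{-1}}^{(\alpha,h)}$ are obtained by replacing $q$ by $q^{-1}$ everywhere: $\frac{\widetilde{G}_{n+1,q^{-1}}^{(\alpha,h)}}{n+1}=\int_{\mathbb{Z}_p}q^{(1-h)\xi}[\xi]_{q^{-\alpha}}^n\,d\mu_{-q^{-1}}(\xi)$. *)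

theory Defs
  imports Complex_Main "HOL-Computational_Algebra.Polynomial" "HOL-Computational_Algebra.Primes"
begin

text \<open>Abstract model of C_p: a field of characteristic 0 with a non-archimedean
absolute value absv, complete, algebraically closed, and normalized by absv p = 1/p
(so that absv restricts to the p-adic absolute value on the rationals).\<close>

definition nonarch_absv :: "('a::field \<Rightarrow> real) \<Rightarrow> bool" where
  "nonarch_absv absv \<longleftrightarrow>
     (\<forall>x. absv x \<ge> 0) \<and> (\<forall>x. absv x = 0 \<longleftrightarrow> x = 0) \<and>
     (\<forall>x y. absv (x * y) = absv x * absv y) \<and>
     (\<forall>x y. absv (x + y) \<le> max (absv x) (absv y))"

definition absv_complete :: "('a::field \<Rightarrow> real) \<Rightarrow> bool" where
  "absv_complete absv \<longleftrightarrow>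
     (\<forall>S::nat \<Rightarrow> 'a. (\<forall>e>0. \<exists>M. \<forall>m\<ge>M. \<forall>n\<ge>M. absv (S m - S n) < e)
        \<longrightarrow> (\<exists>L. (\<lambda>n. absv (S n - L)) \<longlonglongrightarrow> 0))"

definition alg_closed_field :: "'a::field itself \<Rightarrow> bool" where
  "alg_closed_field _ \<longleftrightarrow> (\<forall>P::'a poly. degree P > 0 \<longrightarrow> (\<exists>z. poly P z = 0))"

definition Cp_field :: "('a::field_char_0 \<Rightarrow> real) \<Rightarrow> nat \<Rightarrow> bool" where
  "Cp_field absv p \<longleftrightarrow> nonarch_absv absv \<and> absv_complete absv \<and>
     alg_closed_field TYPE('a) \<and> absv (of_nat p) = 1 / real p"

definition qint :: "'a::field \<Rightarrow> nat \<Rightarrow> 'a" where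
  "qint q x = (if q = 1 then of_nat x else (1 - q ^ x) / (1 - q))"

definition ferm_int :: "('a::field_char_0 \<Rightarrow> real) \<Rightarrow> nat \<Rightarrow> 'a \<Rightarrow> (nat \<Rightarrow> 'a) \<Rightarrow> 'a" where
  "ferm_int absv p q f = (THE L. (\<lambda>N. absv ((\<Sum>\<xi><p ^ N. f \<xi> * (- q) ^ \<xi>) / qint (- q) (p ^ N) - L))
                              \<longlonglongrightarrow> 0)"

text \<open>(h,q)-Genocchi numbers with weight alpha: G_{n+1}/(n+1) = integral of
q^((h-1)xi) [xi]_{q^alpha}^n d mu_{-q}(xi).  G_0 is not used (set to 0).
The q^{-1} numbers are genocchi ... (inverse q).\<close>
fun genocchi :: "('a::field_char_0 \<Rightarrow> real) \<Rightarrow> nat \<Rightarrow> nat \<Rightarrow> nat \<Rightarrow> 'a \<Rightarrow> nat \<Rightarrow> 'a" where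
  "genocchi absv p \<alpha> h q 0 = 0"
| "genocchi absv p \<alpha> h q (Suc n) =
     of_nat (Suc n) * ferm_int absv p q (\<lambda>\<xi>. q ^ ((h - 1) * \<xi>) * qint (q ^ \<alpha>) \<xi> ^ n)"

end

theory Submission
  imports Defs
begin

text \<open>The fermionic q-integral is the limit of the normalised sums over {..<p^N}. For
  integrands bounded by 1 and p-adically Lipschitz these sums converge at the geometric rate
  \<rho>^N, where \<rho> = max(|p|, |q - 1|) < 1. With u = q^\<alpha> and w = q^(h-1), a binomial
  expansion turns the left-hand side into the integral of F \<xi> = w^\<xi> [\<xi>]_u^K (1 - [\<xi>]_u)^M,
  where K = sk and M = n_1 + ... + n_s - sk. Reversing the q^{-1}-sum over {..<P} (P = p^N is
  odd) produces a q-sum, and since [y]_u \<equiv> 1 - [x]_{u^{-1}} modulo [P]_u whenever x + y = P + 1,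
  comparing it with the q-sum of F shifted by two gives \<integral>_q F = F 0 [2]_q + q^2 w \<integral>_{q^{-1}} G
  with G \<xi> = w^{-\<xi>} [\<xi>]_{u^{-1}}^M (1 - [\<xi>]_{u^{-1}})^K. Expanding G binomially gives the
  right-hand side.\<close>

section \<open>Algebraic identities\<close>

lemma qint_eq_sum: "qint a n = (\<Sum>j<n. a ^ j)"
  by (simp add: qint_def sum_gp_strict)

lemma qint_0 [simp]: "qint a 0 = 0"
  by (simp add: qint_eq_sum)

lemma qint_Suc: "qint a (Suc n) = 1 + a * qint a n"
  unfolding qint_eq_sum sum.lessThan_Suc_shift by (simp add: sum_distrib_left)

lemma qint_add: "qint a (m + n) = qint a m + a ^ m * qint a n"
  by (induction n) (simp_all add: qint_eq_sum sum_distrib_left power_add algebra_simps)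

lemma qint_mult: "qint a (m * n) = qint a m * qint (a ^ m) n"
proof (induction n)
  case (Suc n)
  have "qint a (m * Suc n) = qint a (m * n + m)"
    by (simp add: algebra_simps)
  also have "\<dots> = qint a m * qint (a ^ m) n + a ^ (m * n) * qint a m"
    using Suc by (simp add: qint_add)
  also have "\<dots> = qint a m * qint (a ^ m) (Suc n)"
    by (simp add: qint_eq_sum power_mult algebra_simps sum_distrib_left)
  finally show ?case .
qed simp

lemma power_minus_1_eq_qint: "a ^ n - 1 = (a - 1) * qint a n"
  by (simp add: qint_eq_sum power_diff_1_eq)

lemma qint_inverse: "u \<noteq> 0 \<Longrightarrow> u ^ n * qint (inverse u) n = u * qint u n"
proof (induction n)
  case (Suc n)
  have "u ^ Suc n * qint (inverse u) (Suc n) = u ^ Suc n + u ^ n * qint (inverse u) n"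
    using Suc.prems by (simp add: qint_Suc distrib_left)
  also have "\<dots> = u * qint u (n + 1)"
    using Suc by (simp only: qint_add) (simp add: algebra_simps qint_eq_sum)
  finally show ?case by simp
qed simp

lemma qint_neg_odd:
  assumes "odd n" and "b \<noteq> -1"
  shows "qint (- b) n = (1 + b ^ n) / (1 + b)"
proof -
  have "- b \<noteq> 1" using assms(2) by (metis minus_minus)
  with assms(1) show ?thesis by (simp add: qint_def power_minus_odd)
qed

lemma sum_lessThan_mult_split:
  fixes g :: "nat \<Rightarrow> 'b::comm_monoid_add"
  shows "(\<Sum>\<xi><P * m. g \<xi>) = (\<Sum>i<m. \<Sum>\<xi><P. g (\<xi> + P * i))"
proof -
  have "(\<Sum>\<xi><P * m. g \<xi>) = (\<Sum>i<m. sum g {i * P..<i * P + P})"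
    using sum.nat_group[where g=g and k=P and n=m] by (simp add: mult.commute)
  also have "\<dots> = (\<Sum>i<m. \<Sum>\<xi><P. g (\<xi> + P * i))"
  proof (rule sum.cong[OF refl])
    fix i
    have "sum g {i * P..<i * P + P} = (\<Sum>\<xi>\<in>{0..<P}. g (\<xi> + i * P))"
      using sum.shift_bounds_nat_ivl[of g 0 "i * P" P] by (simp add: add.commute)
    thus "sum g {i * P..<i * P + P} = (\<Sum>\<xi><P. g (\<xi> + P * i))"
      by (simp add: atLeast0LessThan mult.commute)
  qed
  finally show ?thesis .
qed

lemma neg_inverse_power_reflect:
  fixes q :: "'a::field"
  assumes "q \<noteq> 0" and "odd P" and "\<eta> < P"
  shows "(- inverse q) ^ (P - Suc \<eta>) * q ^ (P - 1) = (- q) ^ \<eta>"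
proof -
  define a where "a = P - Suc \<eta>"
  have P: "P - 1 = a + \<eta>" unfolding a_def using assms(3) by simp
  have "even (P - 1)" using assms(2,3) by (simp add: even_diff_nat)
  hence "even (a + \<eta>)" by (simp only: P)
  hence sign: "(-1) ^ a = ((-1) ^ \<eta> :: 'a)" by (metis even_add neg_one_even_power neg_one_odd_power)
  have "(- inverse q) ^ a * q ^ (P - 1) = (-1) ^ a * (inverse q ^ a * q ^ a) * q ^ \<eta>"
    by (simp only: P power_add power_minus[of "inverse q"] mult_ac)
  also have "\<dots> = (- q) ^ \<eta>"
    using assms(1) by (simp add: sign power_inverse power_minus[of q])
  finally show ?thesis unfolding a_def .
qed

lemma sum_neg_inverse_reflect:
  fixes q :: "'a::field"
  assumes "q \<noteq> 0" and "odd P"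
  shows "(\<Sum>\<xi><P. g \<xi> * (- inverse q) ^ \<xi>) * q ^ (P - 1) = (\<Sum>\<eta><P. g (P - Suc \<eta>) * (- q) ^ \<eta>)"
proof -
  have "(\<Sum>\<xi><P. g \<xi> * (- inverse q) ^ \<xi>)
      = (\<Sum>\<eta><P. g (P - Suc \<eta>) * (- inverse q) ^ (P - Suc \<eta>))"
    by (rule sum.nat_diff_reindex[symmetric])
  hence "(\<Sum>\<xi><P. g \<xi> * (- inverse q) ^ \<xi>) * q ^ (P - 1)
      = (\<Sum>\<eta><P. g (P - Suc \<eta>) * ((- inverse q) ^ (P - Suc \<eta>) * q ^ (P - 1)))"
    by (simp only: sum_distrib_right mult.assoc)
  also have "\<dots> = (\<Sum>\<eta><P. g (P - Suc \<eta>) * (- q) ^ \<eta>)"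
    using neg_inverse_power_reflect[OF assms] by (intro sum.cong refl) simp
  finally show ?thesis .
qed

lemma qint_neg_inverse_reflect:
  fixes q :: "'a::field"
  shows "q \<noteq> 0 \<Longrightarrow> odd P \<Longrightarrow> qint (- inverse q) P * q ^ (P - 1) = qint (- q) P"
  using sum_neg_inverse_reflect[of q P "\<lambda>_. 1"] by (simp add: qint_eq_sum)

lemma sum_lessThan_shift_2:
  fixes g :: "nat \<Rightarrow> 'b::comm_monoid_add"
  shows "(\<Sum>\<xi><P. g \<xi>) + g P + g (Suc P) = g 0 + g 1 + (\<Sum>\<eta><P. g (\<eta> + 2))"
proof -
  have "(\<Sum>\<xi><Suc (Suc P). g \<xi>) = (\<Sum>\<xi><P. g \<xi>) + g P + g (Suc P)" by simp
  moreover have "(\<Sum>\<xi><Suc (Suc P). g \<xi>) = g 0 + g 1 + (\<Sum>\<eta><P. g (\<eta> + 2))"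
    unfolding sum.lessThan_Suc_shift by (simp add: add.assoc)
  ultimately show ?thesis by simp
qed

lemma power_mult_one_minus_power_expand:
  fixes x :: "'a::comm_ring_1"
  shows "x ^ K * (1 - x) ^ M = (\<Sum>l=0..M. of_nat (M choose l) * (-1) ^ l * x ^ (l + K))"
proof -
  have "(1 - x) ^ M = (\<Sum>l\<le>M. of_nat (M choose l) * (- x) ^ l * 1 ^ (M - l))"
    using binomial_ring[of "- x" 1 M] by simp
  thus ?thesis
    by (simp add: atLeast0AtMost sum_distrib_left power_add power_minus[of x] mult_ac)
qed

lemma power_mult_one_minus_power_expand_reflected:
  fixes x :: "'a::comm_ring_1"
  shows "x ^ M * (1 - x) ^ K
       = (\<Sum>l=0..K. of_nat (K choose l) * (-1) ^ (K + l) * x ^ (M + K - l))"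
proof -
  have "(1 - x) ^ K = (-1) ^ K * (-1 + x) ^ K"
    by (metis add.commute diff_minus_eq_add minus_diff_eq mult_minus1 power_minus
        uminus_add_conv_diff)
  also have "(-1 + x) ^ K = (\<Sum>l\<le>K. of_nat (K choose l) * (-1) ^ l * x ^ (K - l))"
    by (rule binomial_ring)
  finally have "x ^ M * (1 - x) ^ K
      = (\<Sum>l\<le>K. of_nat (K choose l) * ((-1) ^ K * (-1) ^ l) * (x ^ M * x ^ (K - l)))"
    by (simp add: sum_distrib_left mult_ac)
  also have "\<dots> = (\<Sum>l=0..K. of_nat (K choose l) * (-1) ^ (K + l) * x ^ (M + K - l))"
    by (intro sum.cong) (auto simp: power_add[symmetric] atLeast0AtMost)
  finally show ?thesis .
qed

lemma sum_alternating_binomial: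
  "K \<noteq> 0 \<Longrightarrow> (\<Sum>l=0..K. of_nat (K choose l) * (-1) ^ (K + l) :: 'a::comm_ring_1) = 0"
proof -
  assume "K \<noteq> 0"
  have "(\<Sum>l=0..K. of_nat (K choose l) * (-1) ^ (K + l) :: 'a)
      = (-1) ^ K * (\<Sum>l\<le>K. (-1) ^ l * of_nat (K choose l))"
    by (simp add: atLeast0AtMost power_add sum_distrib_left mult_ac)
  thus ?thesis using \<open>K \<noteq> 0\<close> by (simp add: choose_alternating_sum)
qed

lemma genocchi_Suc_divide:
  "genocchi absv p \<alpha> h q (Suc n) / of_nat (Suc n)
     = ferm_int absv p q (\<lambda>\<xi>. (q ^ (h - 1)) ^ \<xi> * qint (q ^ \<alpha>) \<xi> ^ n)"
  by (simp add: power_mult del: of_nat_Suc)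

section \<open>Non-archimedean estimates\<close>

locale padic_scale =
  fixes absv :: "'a::field_char_0 \<Rightarrow> real" and p :: nat and \<rho> :: real
  assumes nonarch: "nonarch_absv absv" and complete: "absv_complete absv"
    and p_gt_1: "1 < p" and odd_p: "odd p" and absv_p: "absv (of_nat p) = 1 / real p"
    and rho_ge: "1 / real p \<le> \<rho>" and rho_less_1: "\<rho> < 1"
begin

lemma absv_nonneg [simp]: "absv x \<ge> 0"
  using nonarch unfolding nonarch_absv_def by blast

lemma absv_eq_0_iff [simp]: "absv x = 0 \<longleftrightarrow> x = 0"
  using nonarch unfolding nonarch_absv_def by blast

lemma absv_0 [simp]: "absv 0 = 0"
  by simp

lemma absv_mult: "absv (x * y) = absv x * absv y"
  using nonarch unfolding nonarch_absv_def by blast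

lemma absv_add_le_max: "absv (x + y) \<le> max (absv x) (absv y)"
  using nonarch unfolding nonarch_absv_def by blast

lemma absv_1 [simp]: "absv 1 = 1"
  using absv_mult[of 1 1] absv_eq_0_iff[of 1] by (metis mult_cancel_left1 one_neq_zero)

lemma absv_minus [simp]: "absv (- x) = absv x"
proof -
  have "absv (-1) * absv (-1) = 1" using absv_mult[of "-1" "-1"] by simp
  hence "absv (-1) = 1" using absv_nonneg[of "-1"]
    by (metis abs_of_nonneg real_sqrt_abs2 real_sqrt_one)
  thus ?thesis using absv_mult[of "-1" x] by simp
qed

lemma absv_minus_commute: "absv (x - y) = absv (y - x)"
  by (metis absv_minus minus_diff_eq)

lemma absv_triangle: "absv (x + y) \<le> absv x + absv y"
  using absv_add_le_max[of x y] absv_nonneg[of x] absv_nonneg[of y] by linarith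

lemma absv_power: "absv (x ^ n) = absv x ^ n"
  by (induction n) (simp_all add: absv_mult)

lemma absv_inverse: "absv (inverse x) = inverse (absv x)"
proof (cases "x = 0")
  case False
  hence "absv (inverse x) * absv x = 1" using absv_mult[of "inverse x" x] by simp
  thus ?thesis by (metis inverse_unique mult.commute)
qed simp

lemma absv_divide: "absv (x / y) = absv x / absv y"
  by (simp add: divide_inverse absv_mult absv_inverse)

lemma absv_add_le: "absv x \<le> b \<Longrightarrow> absv y \<le> b \<Longrightarrow> absv (x + y) \<le> b"
  using absv_add_le_max[of x y] by linarith

lemma absv_diff_le: "absv x \<le> b \<Longrightarrow> absv y \<le> b \<Longrightarrow> absv (x - y) \<le> b"
  using absv_add_le[of x b "- y"] by simp

lemma absv_sum_le:
  assumes "\<And>i. i \<in> A \<Longrightarrow> absv (f i) \<le> b" and "0 \<le> b"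
  shows "absv (sum f A) \<le> b"
  using assms by (induction A rule: infinite_finite_induct) (simp_all add: absv_add_le)

lemma absv_of_nat_le_1: "absv (of_nat n) \<le> 1"
  by (induction n) (simp_all add: absv_add_le add.commute[of 1])

lemma absv_add_eq_of_less: "absv y < absv x \<Longrightarrow> absv (x + y) = absv x"
  using absv_add_le_max[of x y] absv_add_le_max[of "x + y" "- y"]
  by (simp add: max_def split: if_splits)

lemma absv_eq_1_of_near_1: "absv (a - 1) < 1 \<Longrightarrow> absv a = 1"
  using absv_add_eq_of_less[of "a - 1" 1] by simp

lemma absv_2: "absv 2 = 1"
proof (rule ccontr)
  assume "absv 2 \<noteq> 1"
  hence lt: "absv (2::'a) < 1" using absv_of_nat_le_1[of 2] by simp
  obtain m where pm: "p = 2 * m + 1" using odd_p oddE by blast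
  have "absv (2 * (of_nat m :: 'a)) < 1"
    using lt absv_of_nat_le_1[of m] mult_left_le[of "absv (of_nat m :: 'a)" "absv (2::'a)"]
    by (simp add: absv_mult)
  moreover have "absv (of_nat p :: 'a) < 1" using absv_p p_gt_1 by simp
  ultimately have "absv (of_nat p - 2 * of_nat m :: 'a) < 1"
    using absv_add_le_max[of "of_nat p :: 'a" "- (2 * of_nat m)"] by simp
  thus False by (simp add: pm)
qed

lemma absv_1_plus: "absv (x - 1) < 1 \<Longrightarrow> absv (1 + x) = 1"
  using absv_add_eq_of_less[of "x - 1" 2] absv_2 by (simp add: algebra_simps)

lemma rho_nonneg: "0 \<le> \<rho>"
  using rho_ge by (smt (verit) divide_nonneg_nonneg of_nat_0_le_iff)

lemma rho_power_le: "n \<le> m \<Longrightarrow> \<rho> ^ m \<le> \<rho> ^ n"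
  using rho_nonneg rho_less_1 by (simp add: power_decreasing)

lemma rho_power_tendsto_0: "(\<lambda>N. \<rho> ^ N) \<longlonglongrightarrow> 0"
  using rho_nonneg rho_less_1 by (intro LIMSEQ_power_zero) simp

lemma eq_0_of_absv_le_rho_power: "(\<And>N. absv x \<le> \<rho> ^ N) \<Longrightarrow> x = 0"
  using LIMSEQ_le_const[OF rho_power_tendsto_0, of "absv x"] absv_nonneg[of x] by force

lemma absv_qint_le_1: "absv a \<le> 1 \<Longrightarrow> absv (qint a n) \<le> 1"
  unfolding qint_eq_sum by (rule absv_sum_le) (simp_all add: absv_power power_le_one)

lemma absv_power_minus_1_le: "absv a \<le> 1 \<Longrightarrow> absv (a ^ n - 1) \<le> absv (a - 1)"
  using absv_qint_le_1[of a n] by (simp add: power_minus_1_eq_qint absv_mult mult_left_le)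

lemma absv_eq_1_of_close: "absv (a - 1) \<le> \<rho> \<Longrightarrow> absv a = 1"
  using absv_eq_1_of_near_1 rho_less_1 by simp

lemma close_power: "absv (a - 1) \<le> \<rho> \<Longrightarrow> absv (a ^ n - 1) \<le> \<rho>"
  using absv_power_minus_1_le[of a n] absv_eq_1_of_close[of a] by simp

lemma close_inverse: "absv (a - 1) \<le> \<rho> \<Longrightarrow> absv (inverse a - 1) \<le> \<rho>"
proof -
  assume a: "absv (a - 1) \<le> \<rho>"
  hence "absv a = 1" by (rule absv_eq_1_of_close)
  moreover from this have "a \<noteq> 0" by auto
  hence "inverse a - 1 = - (a - 1) / a" by (simp add: field_simps)
  ultimately show ?thesis using a by (simp add: absv_divide absv_minus_commute[of 1])
qed

text \<open>The p-adic smallness of [p]_a: it is p plus terms a^j - 1, each of size at most \<rho>.\<close>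

lemma absv_qint_p_le: "absv (a - 1) \<le> \<rho> \<Longrightarrow> absv (qint a p) \<le> \<rho>"
proof -
  assume a: "absv (a - 1) \<le> \<rho>"
  have "qint a p = of_nat p + (\<Sum>j<p. a ^ j - 1)"
    by (simp add: qint_eq_sum sum_subtractf)
  moreover have "absv (\<Sum>j<p. a ^ j - 1) \<le> \<rho>"
    using a by (intro absv_sum_le close_power rho_nonneg)
  moreover have "absv (of_nat p :: 'a) \<le> \<rho>" using absv_p rho_ge by simp
  ultimately show ?thesis by (simp add: absv_add_le)
qed

lemma absv_qint_p_power_le: "absv (a - 1) \<le> \<rho> \<Longrightarrow> absv (qint a (p ^ N)) \<le> \<rho> ^ N"
proof (induction N)
  case (Suc N)
  have "absv (qint (a ^ p ^ N) p) \<le> \<rho>"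
    using Suc.prems by (intro absv_qint_p_le close_power)
  hence "absv (qint a (p ^ N)) * absv (qint (a ^ p ^ N) p) \<le> \<rho> ^ N * \<rho>"
    using Suc by (intro mult_mono) (simp_all add: rho_nonneg)
  moreover have "p ^ Suc N = p ^ N * p" by simp
  ultimately show ?case by (simp only: qint_mult absv_mult power_Suc2)
qed (simp add: qint_eq_sum)

lemma absv_qint_p_power_mult_le:
  assumes "absv (a - 1) \<le> \<rho>"
  shows "absv (qint a (p ^ N * j)) \<le> \<rho> ^ N"
proof -
  have "absv (qint (a ^ p ^ N) j) \<le> 1"
    using absv_eq_1_of_close[OF assms] by (intro absv_qint_le_1) (simp add: absv_power)
  hence "absv (qint a (p ^ N)) * absv (qint (a ^ p ^ N) j) \<le> \<rho> ^ N * 1"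
    using absv_qint_p_power_le[OF assms] by (intro mult_mono) (simp_all add: rho_nonneg)
  thus ?thesis by (simp add: qint_mult absv_mult)
qed

lemma absv_power_p_power_mult_minus_1_le:
  assumes "absv (a - 1) \<le> \<rho>"
  shows "absv (a ^ (p ^ N * j) - 1) \<le> \<rho> ^ N"
proof -
  have "absv (a - 1) * absv (qint a (p ^ N * j)) \<le> 1 * \<rho> ^ N"
    using absv_qint_p_power_mult_le[OF assms] assms rho_less_1 by (intro mult_mono) simp_all
  thus ?thesis by (simp add: power_minus_1_eq_qint absv_mult)
qed

lemma absv_mult_diff_le:
  assumes "absv x \<le> 1" "absv y \<le> 1" "absv x' \<le> 1" "absv y' \<le> 1"
    and "absv (x' - x) \<le> b" "absv (y' - y) \<le> b"
  shows "absv (x' * y' - x * y) \<le> b"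
proof -
  have "absv x' * absv (y' - y) \<le> 1 * b"
    using assms by (intro mult_mono) auto
  moreover have "absv (x' - x) * absv y \<le> b * 1"
    using assms by (intro mult_mono) (auto intro: order.trans[OF absv_nonneg])
  moreover have "x' * y' - x * y = x' * (y' - y) + (x' - x) * y"
    by (simp add: algebra_simps)
  ultimately show ?thesis by (simp add: absv_add_le absv_mult)
qed

lemma absv_power_diff_le:
  assumes "absv a \<le> 1" "absv b \<le> 1" "absv (a - b) \<le> r"
  shows "absv (a ^ n - b ^ n) \<le> r"
proof (induction n)
  case 0
  show ?case using order.trans[OF absv_nonneg assms(3)] by simp
next
  case (Suc n)
  show ?case using absv_mult_diff_le[of b "b ^ n" a "a ^ n" r] assms Suc
    by (simp add: absv_power power_le_one)
qed

text \<open>This replaces the paper's uniform differentiability: it is exactly what makes the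
  Riemann sums converge at rate \<rho>^N.\<close>

definition padic_regular :: "(nat \<Rightarrow> 'a) \<Rightarrow> bool" where
  "padic_regular f \<longleftrightarrow>
     (\<forall>\<xi>. absv (f \<xi>) \<le> 1) \<and> (\<forall>\<xi> N j. absv (f (\<xi> + p ^ N * j) - f \<xi>) \<le> \<rho> ^ N)"

lemma padic_regularD:
  "padic_regular f \<Longrightarrow> absv (f (\<xi> + p ^ N * j) - f \<xi>) \<le> \<rho> ^ N"
  unfolding padic_regular_def by blast

lemma padic_regular_mult:
  "padic_regular f \<Longrightarrow> padic_regular g \<Longrightarrow> padic_regular (\<lambda>\<xi>. f \<xi> * g \<xi>)"
  unfolding padic_regular_def by (auto simp: absv_mult intro!: absv_mult_diff_le mult_le_one)

lemma padic_regular_power: "padic_regular f \<Longrightarrow> padic_regular (\<lambda>\<xi>. f \<xi> ^ n)"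
proof (induction n)
  case 0
  show ?case unfolding padic_regular_def using rho_nonneg by simp
next
  case (Suc n)
  thus ?case using padic_regular_mult[of f "\<lambda>\<xi>. f \<xi> ^ n"] by simp
qed

lemma padic_regular_one_minus: "padic_regular f \<Longrightarrow> padic_regular (\<lambda>\<xi>. 1 - f \<xi>)"
proof -
  have "1 - f x - (1 - f y) = - (f x - f y)" for x y by simp
  thus "padic_regular f \<Longrightarrow> padic_regular (\<lambda>\<xi>. 1 - f \<xi>)"
    unfolding padic_regular_def by (simp only: absv_minus) (auto intro: absv_diff_le)
qed

lemma padic_regular_power_base:
  assumes "absv (a - 1) \<le> \<rho>"
  shows "padic_regular (\<lambda>\<xi>. a ^ \<xi>)"
proof -
  have "a ^ (\<xi> + p ^ N * j) - a ^ \<xi> = a ^ \<xi> * (a ^ (p ^ N * j) - 1)" for \<xi> N j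
    by (simp add: power_add algebra_simps)
  thus ?thesis unfolding padic_regular_def using absv_eq_1_of_close[OF assms]
    by (simp add: absv_mult absv_power absv_power_p_power_mult_minus_1_le[OF assms])
qed

lemma padic_regular_qint:
  assumes "absv (a - 1) \<le> \<rho>"
  shows "padic_regular (\<lambda>\<xi>. qint a \<xi>)"
proof -
  have "qint a (\<xi> + p ^ N * j) - qint a \<xi> = a ^ \<xi> * qint a (p ^ N * j)" for \<xi> N j
    by (simp add: qint_add)
  thus ?thesis unfolding padic_regular_def using absv_eq_1_of_close[OF assms]
    by (simp add: absv_mult absv_power absv_qint_p_power_mult_le[OF assms] absv_qint_le_1)
qed

section \<open>Riemann sums and the fermionic integral\<close>

lemma qint_neg_p_power:
  assumes "absv (b - 1) \<le> \<rho>"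
  shows "qint (- b) (p ^ N) = (1 + b ^ p ^ N) / (1 + b)" and "absv (qint (- b) (p ^ N)) = 1"
proof -
  have b: "absv (1 + b) = 1" using assms rho_less_1 by (intro absv_1_plus) simp
  have "absv (b ^ p ^ N - 1) < 1"
    using close_power[OF assms, of "p ^ N"] rho_less_1 by linarith
  hence bP: "absv (1 + b ^ p ^ N) = 1" by (rule absv_1_plus)
  have "b \<noteq> -1" using b by auto
  hence eq: "qint (- b) (p ^ N) = (1 + b ^ p ^ N) / (1 + b)"
    using odd_p by (intro qint_neg_odd) simp_all
  show "qint (- b) (p ^ N) = (1 + b ^ p ^ N) / (1 + b)" by (rule eq)
  show "absv (qint (- b) (p ^ N)) = 1" by (simp add: eq absv_divide b bP)
qed

definition riemann_sum :: "'a \<Rightarrow> (nat \<Rightarrow> 'a) \<Rightarrow> nat \<Rightarrow> 'a" where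
  "riemann_sum b f N = (\<Sum>\<xi><p ^ N. f \<xi> * (- b) ^ \<xi>) / qint (- b) (p ^ N)"

text \<open>Splitting {..<p^(N+1)} into p blocks of length p^N, the normaliser factors as
  [p^N]_{-b} [p]_{(-b)^(p^N)}; the difference of consecutive sums is then a normalised
  sum of increments f(\<xi> + p^N i) - f \<xi>.\<close>

lemma riemann_sum_Suc_diff_le:
  assumes f: "padic_regular f" and b: "absv (b - 1) \<le> \<rho>"
  shows "absv (riemann_sum b f (Suc N) - riemann_sum b f N) \<le> \<rho> ^ N"
proof -
  define P where "P = p ^ N"
  define c where "c = - b"
  define Q where "Q = qint c P"
  define R where "R = qint (c ^ P) p"
  have QR: "qint c (p ^ Suc N) = Q * R"
    unfolding Q_def R_def P_def by (simp add: qint_mult[symmetric] mult.commute)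
  have absv_QR: "absv (Q * R) = 1"
    using QR qint_neg_p_power(2)[OF b, of "Suc N"] by (simp add: c_def)
  hence "R \<noteq> 0" "Q \<noteq> 0" by auto
  have split: "(\<Sum>\<xi><p ^ Suc N. f \<xi> * c ^ \<xi>) = (\<Sum>i<p. \<Sum>\<xi><P. f (\<xi> + P * i) * c ^ (\<xi> + P * i))"
    using sum_lessThan_mult_split[of _ P p] by (simp add: P_def mult.commute)
  have "(\<Sum>\<xi><P. f \<xi> * c ^ \<xi>) * R = (\<Sum>i<p. \<Sum>\<xi><P. f \<xi> * c ^ (\<xi> + P * i))"
    unfolding R_def qint_eq_sum sum_distrib_left sum_distrib_right
    by (simp add: power_add power_mult mult.assoc)
  with split \<open>R \<noteq> 0\<close> \<open>Q \<noteq> 0\<close>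
  have "riemann_sum b f (Suc N) - riemann_sum b f N
      = (\<Sum>i<p. \<Sum>\<xi><P. (f (\<xi> + P * i) - f \<xi>) * c ^ (\<xi> + P * i)) / (Q * R)"
    unfolding riemann_sum_def QR[unfolded c_def]
    by (simp add: c_def P_def Q_def field_simps sum_subtractf left_diff_distrib)
  moreover have "absv c = 1" unfolding c_def using absv_eq_1_of_close[OF b] by simp
  hence "absv (\<Sum>i<p. \<Sum>\<xi><P. (f (\<xi> + P * i) - f \<xi>) * c ^ (\<xi> + P * i)) \<le> \<rho> ^ N"
    by (intro absv_sum_le) (simp_all add: absv_mult absv_power P_def padic_regularD[OF f] rho_nonneg)
  ultimately show ?thesis by (simp add: absv_divide absv_QR)
qed

lemma riemann_sum_diff_le:
  assumes f: "padic_regular f" and b: "absv (b - 1) \<le> \<rho>" and "n \<le> m"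
  shows "absv (riemann_sum b f m - riemann_sum b f n) \<le> \<rho> ^ n"
  using \<open>n \<le> m\<close>
proof (induction m rule: dec_induct)
  case base
  thus ?case by (simp add: rho_nonneg)
next
  case (step m)
  have "absv (riemann_sum b f (Suc m) - riemann_sum b f m) \<le> \<rho> ^ n"
    using riemann_sum_Suc_diff_le[OF f b, of m] rho_power_le[OF step(1)] by linarith
  with step(3) show ?case
    using absv_add_le[of "riemann_sum b f (Suc m) - riemann_sum b f m"] by fastforce
qed

lemma absv_limit_unique:
  assumes "(\<lambda>n. absv (S n - L)) \<longlonglongrightarrow> 0" and "(\<lambda>n. absv (S n - L')) \<longlonglongrightarrow> 0"
  shows "L = L'"
proof -
  have "absv (L' - L) \<le> absv (S n - L') + absv (S n - L)" for n
    using absv_triangle[of "- (S n - L')" "S n - L"] by (simp add: absv_minus_commute[of L'])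
  hence "absv (L' - L) \<le> 0 + 0"
    by (intro LIMSEQ_le_const[OF tendsto_add[OF assms(2,1)]]) blast
  thus ?thesis using absv_nonneg[of "L' - L"] by simp
qed

lemma limit_at_rate_rho:
  assumes cauchy: "\<And>n m. n \<le> m \<Longrightarrow> absv (S m - S n) \<le> \<rho> ^ n"
  obtains L where "\<And>N. absv (S N - L) \<le> \<rho> ^ N"
proof -
  have "\<exists>L. (\<lambda>n. absv (S n - L)) \<longlonglongrightarrow> 0"
  proof (rule complete[unfolded absv_complete_def, rule_format])
    fix e :: real assume "e > 0"
    then obtain M where M: "\<rho> ^ M < e" using real_arch_pow_inv rho_less_1 by blast
    have "absv (S m - S n) < e" if "M \<le> m" "M \<le> n" for m n
      using cauchy[of n m] cauchy[of m n] rho_power_le[of M m] rho_power_le[of M n] that M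
      by (cases "n \<le> m") (auto simp: absv_minus_commute[of "S m"])
    thus "\<exists>M. \<forall>m\<ge>M. \<forall>n\<ge>M. absv (S m - S n) < e" by blast
  qed
  then obtain L where L: "(\<lambda>n. absv (S n - L)) \<longlonglongrightarrow> 0" by blast
  have "absv (S N - L) \<le> \<rho> ^ N" for N
  proof -
    have "absv (S N - L) \<le> \<rho> ^ N + absv (S m - L)" if "N \<le> m" for m
      using absv_triangle[of "S N - S m" "S m - L"] cauchy[OF that]
      by (simp add: absv_minus_commute[of "S N"])
    hence "absv (S N - L) \<le> \<rho> ^ N + 0"
      by (intro LIMSEQ_le_const[OF tendsto_add[OF tendsto_const L]]) blast
    thus ?thesis by simp
  qed
  thus thesis by (rule that)
qed

lemma ferm_int_eqI:
  assumes "\<And>N. absv (riemann_sum b f N - L) \<le> \<rho> ^ N"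
  shows "ferm_int absv p b f = L"
proof -
  have "(\<lambda>N. absv (riemann_sum b f N - L)) \<longlonglongrightarrow> 0"
    using assms by (intro tendsto_sandwich[OF _ _ tendsto_const rho_power_tendsto_0]) simp_all
  thus ?thesis unfolding ferm_int_def riemann_sum_def[symmetric]
    by (blast intro: absv_limit_unique)
qed

lemma riemann_sum_ferm_int_le:
  assumes "padic_regular f" and "absv (b - 1) \<le> \<rho>"
  shows "absv (riemann_sum b f N - ferm_int absv p b f) \<le> \<rho> ^ N"
proof -
  obtain L where "\<And>N. absv (riemann_sum b f N - L) \<le> \<rho> ^ N"
    using limit_at_rate_rho riemann_sum_diff_le[OF assms] by metis
  moreover from this have "ferm_int absv p b f = L" by (rule ferm_int_eqI)
  ultimately show ?thesis by simp
qed

lemma riemann_sum_sum: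
  "riemann_sum b (\<lambda>\<xi>. \<Sum>l\<in>A. a l * f l \<xi>) N = (\<Sum>l\<in>A. a l * riemann_sum b (f l) N)"
proof -
  have "(\<Sum>\<xi><p ^ N. (\<Sum>l\<in>A. a l * f l \<xi>) * (- b) ^ \<xi>)
      = (\<Sum>l\<in>A. a l * (\<Sum>\<xi><p ^ N. f l \<xi> * (- b) ^ \<xi>))"
    by (simp add: sum_distrib_right sum_distrib_left mult.assoc sum.swap[of _ "{..<p ^ N}"])
  thus ?thesis unfolding riemann_sum_def by (simp add: sum_divide_distrib[symmetric])
qed

lemma ferm_int_sum:
  assumes b: "absv (b - 1) \<le> \<rho>"
    and f: "\<And>l. l \<in> A \<Longrightarrow> padic_regular (f l)" and a: "\<And>l. l \<in> A \<Longrightarrow> absv (a l) \<le> 1"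
  shows "ferm_int absv p b (\<lambda>\<xi>. \<Sum>l\<in>A. a l * f l \<xi>) = (\<Sum>l\<in>A. a l * ferm_int absv p b (f l))"
proof (rule ferm_int_eqI)
  fix N
  have "absv (a l * (riemann_sum b (f l) N - ferm_int absv p b (f l))) \<le> \<rho> ^ N" if "l \<in> A" for l
    using mult_mono[OF a[OF that] riemann_sum_ferm_int_le[OF f[OF that] b]]
    by (simp add: absv_mult)
  hence "absv (\<Sum>l\<in>A. a l * (riemann_sum b (f l) N - ferm_int absv p b (f l))) \<le> \<rho> ^ N"
    by (intro absv_sum_le) (simp_all add: rho_nonneg)
  thus "absv (riemann_sum b (\<lambda>\<xi>. \<Sum>l\<in>A. a l * f l \<xi>) N - (\<Sum>l\<in>A. a l * ferm_int absv p b (f l)))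
      \<le> \<rho> ^ N"
    by (simp add: riemann_sum_sum sum_subtractf right_diff_distrib)
qed

section \<open>Reflection symmetry\<close>

lemma riemann_sum_inverse_reflect:
  assumes q: "absv (q - 1) \<le> \<rho>"
  shows "qint (- q) (p ^ N) * riemann_sum (inverse q) G N
       = (\<Sum>\<eta><p ^ N. G (p ^ N - Suc \<eta>) * (- q) ^ \<eta>)"
proof -
  define P where "P = p ^ N"
  have "q \<noteq> 0" using absv_eq_1_of_close[OF q] by auto
  have "odd P" unfolding P_def using odd_p by simp
  have "qint (- q) P * riemann_sum (inverse q) G N
      = (qint (- inverse q) P * q ^ (P - 1)) * ((\<Sum>\<xi><P. G \<xi> * (- inverse q) ^ \<xi>) / qint (- inverse q) P)"
    unfolding riemann_sum_def P_def[symmetric]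
    by (simp only: qint_neg_inverse_reflect[OF \<open>q \<noteq> 0\<close> \<open>odd P\<close>])
  also have "\<dots> = (\<Sum>\<xi><P. G \<xi> * (- inverse q) ^ \<xi>) * q ^ (P - 1)"
    using qint_neg_p_power(2)[OF close_inverse[OF q], of N] unfolding P_def[symmetric]
    by (metis (no_types, lifting) absv_0 mult.commute nonzero_mult_div_cancel_left
        times_divide_eq_right zero_neq_one)
  also have "\<dots> = (\<Sum>\<eta><P. G (P - Suc \<eta>) * (- q) ^ \<eta>)"
    using \<open>q \<noteq> 0\<close> \<open>odd P\<close> by (rule sum_neg_inverse_reflect)
  finally show ?thesis unfolding P_def .
qed

lemma qint_reflect_close:
  assumes u: "absv (u - 1) \<le> \<rho>" and xy: "x + y = p ^ N + 1"
  shows "absv (qint u y - (1 - qint (inverse u) x)) \<le> \<rho> ^ N"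
proof -
  have u1: "absv u = 1" using absv_eq_1_of_close[OF u] .
  hence "u \<noteq> 0" by auto
  have "qint u x + u ^ x * qint u y = 1 + u * qint u (p ^ N)"
    using qint_add[of u x y] qint_Suc[of u "p ^ N"] xy by simp
  moreover have "u ^ x * qint (inverse u) x = u * qint u x"
    using \<open>u \<noteq> 0\<close> by (rule qint_inverse)
  ultimately have "u ^ x * (qint u y - (1 - qint (inverse u) x))
      = u * qint u (p ^ N) - (u ^ x - 1) + (u - 1) * qint u x"
    by (simp add: algebra_simps)
  also have "\<dots> = u * qint u (p ^ N)"
    by (simp add: power_minus_1_eq_qint)
  finally have "absv (u ^ x * (qint u y - (1 - qint (inverse u) x))) = absv (u * qint u (p ^ N))"
    by (rule arg_cong)
  hence "absv (qint u y - (1 - qint (inverse u) x)) = absv (qint u (p ^ N * 1))"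
    by (simp add: absv_mult absv_power u1)
  thus ?thesis using absv_qint_p_power_mult_le[OF u, of N 1] by simp
qed

lemma power_reflect_close:
  assumes w: "absv (w - 1) \<le> \<rho>" and xy: "x + y = p ^ N + 1"
  shows "absv (w ^ y - w * inverse w ^ x) \<le> \<rho> ^ N"
proof -
  have w1: "absv w = 1" using absv_eq_1_of_close[OF w] .
  hence "w \<noteq> 0" by auto
  have "w ^ x * w ^ y = w * w ^ p ^ N" unfolding power_add[symmetric] xy by simp
  moreover have "w ^ x * (w * inverse w ^ x) = w"
    using \<open>w \<noteq> 0\<close> by (simp add: power_inverse field_simps)
  ultimately have "w ^ x * (w ^ y - w * inverse w ^ x) = w * (w ^ p ^ N - 1)"
    by (simp add: algebra_simps)
  hence "absv (w ^ x * (w ^ y - w * inverse w ^ x)) = absv (w * (w ^ p ^ N - 1))"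
    by (rule arg_cong)
  hence "absv (w ^ y - w * inverse w ^ x) = absv (w ^ (p ^ N * 1) - 1)"
    by (simp add: absv_mult absv_power w1)
  thus ?thesis using absv_power_p_power_mult_minus_1_le[OF w, of N 1] by simp
qed

lemma integrand_reflect_close:
  assumes u: "absv (u - 1) \<le> \<rho>" and w: "absv (w - 1) \<le> \<rho>" and xy: "x + y = p ^ N + 1"
  shows "absv (w ^ y * qint u y ^ K * (1 - qint u y) ^ M
           - w * inverse w ^ x * (1 - qint (inverse u) x) ^ K * qint (inverse u) x ^ M) \<le> \<rho> ^ N"
proof -
  define c where "c = qint u y"
  define d where "d = qint (inverse u) x"
  have u1: "absv u = 1" and w1: "absv w = 1" using absv_eq_1_of_close u w by blast+
  have c: "absv c \<le> 1" unfolding c_def by (rule absv_qint_le_1) (simp add: u1)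
  have d: "absv d \<le> 1" unfolding d_def by (rule absv_qint_le_1) (simp add: absv_inverse u1)
  have c': "absv (1 - c) \<le> 1" and d': "absv (1 - d) \<le> 1"
    using c d by (simp_all add: absv_diff_le)
  have wy: "absv (w ^ y) \<le> 1" and wx: "absv (w * inverse w ^ x) \<le> 1"
    by (simp_all add: absv_mult absv_power absv_inverse w1)
  have cd: "absv (c - (1 - d)) \<le> \<rho> ^ N"
    unfolding c_def d_def by (rule qint_reflect_close[OF u xy])
  hence cd': "absv ((1 - c) - d) \<le> \<rho> ^ N"
    by (metis absv_minus minus_diff_eq diff_diff_eq2 add.commute)
  have K: "absv (c ^ K - (1 - d) ^ K) \<le> \<rho> ^ N" using c d' cd by (rule absv_power_diff_le)
  have M: "absv ((1 - c) ^ M - d ^ M) \<le> \<rho> ^ N" using c' d cd' by (rule absv_power_diff_le)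
  have wK: "absv (w ^ y * c ^ K - (w * inverse w ^ x) * (1 - d) ^ K) \<le> \<rho> ^ N"
    by (rule absv_mult_diff_le)
      (use K wx wy c d' power_reflect_close[OF w xy] in \<open>simp_all add: absv_power power_le_one\<close>)
  have "absv (w ^ y * c ^ K * (1 - c) ^ M - (w * inverse w ^ x) * (1 - d) ^ K * d ^ M)
      \<le> \<rho> ^ N"
    by (rule absv_mult_diff_le)
      (use wK M wx wy c d c' d' in \<open>simp_all add: absv_power absv_mult power_le_one mult_le_one\<close>)
  thus ?thesis unfolding c_def d_def .
qed

text \<open>Reversing the q^{-1}-sum turns it into a q-sum over the same range, shifted by 2
  against the q-sum of F; only boundary terms and the pointwise differences remain.\<close>

lemma riemann_sum_reflect_identity:
  fixes N :: nat and F G :: "nat \<Rightarrow> 'a"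
  assumes q: "absv (q - 1) \<le> \<rho>" and F1: "F 1 = 0"
  defines "P \<equiv> p ^ N"
  shows "qint (- q) P
           * (riemann_sum q F N - q ^ 2 * w * riemann_sum (inverse q) G N - F 0 * (1 + q))
       = q ^ P * (F P - F 0) - q ^ Suc P * F (Suc P)
         + (\<Sum>\<eta><P. (- q) ^ (\<eta> + 2) * (F (\<eta> + 2) - w * G (P - Suc \<eta>)))"
proof -
  define Q where "Q = qint (- q) P"
  have "odd P" unfolding P_def using odd_p by simp
  have "absv (1 + q) = 1" using q rho_less_1 by (intro absv_1_plus) simp
  hence "1 + q \<noteq> 0" by auto
  have "absv Q = 1" using qint_neg_p_power(2)[OF q, of N] by (simp add: Q_def P_def)
  hence "Q \<noteq> 0" by auto
  have F: "Q * riemann_sum q F N = (\<Sum>\<xi><P. F \<xi> * (- q) ^ \<xi>)"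
    unfolding riemann_sum_def Q_def P_def using \<open>Q \<noteq> 0\<close> by (simp add: Q_def P_def)
  have G: "Q * (q ^ 2 * w * riemann_sum (inverse q) G N)
      = (\<Sum>\<eta><P. (- q) ^ (\<eta> + 2) * (w * G (P - Suc \<eta>)))"
    using riemann_sum_inverse_reflect[OF q, of N G]
    by (simp add: Q_def P_def sum_distrib_left power_add power2_eq_square mult_ac)
  have shift: "(\<Sum>\<xi><P. F \<xi> * (- q) ^ \<xi>)
      = F 0 + (\<Sum>\<eta><P. F (\<eta> + 2) * (- q) ^ (\<eta> + 2)) - F P * (- q) ^ P - F (Suc P) * (- q) ^ Suc P"
    using sum_lessThan_shift_2[of "\<lambda>\<xi>. F \<xi> * (- q) ^ \<xi>" P] F1 by (simp add: algebra_simps)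
  have "Q * (F 0 * (1 + q)) = F 0 * (1 + q ^ P)"
    using qint_neg_p_power(1)[OF q, of N] \<open>1 + q \<noteq> 0\<close> by (simp add: Q_def P_def)
  with F G shift \<open>odd P\<close> show ?thesis
    unfolding Q_def[symmetric]
    by (simp add: right_diff_distrib power_minus_odd algebra_simps sum_subtractf)
qed

lemma riemann_sum_symmetry:
  fixes K M N :: nat
  assumes q: "absv (q - 1) \<le> \<rho>" and u: "absv (u - 1) \<le> \<rho>" and w: "absv (w - 1) \<le> \<rho>"
    and "M \<ge> 1"
  defines "F \<equiv> \<lambda>\<xi>. w ^ \<xi> * qint u \<xi> ^ K * (1 - qint u \<xi>) ^ M"
    and "G \<equiv> \<lambda>\<xi>. inverse w ^ \<xi> * qint (inverse u) \<xi> ^ M * (1 - qint (inverse u) \<xi>) ^ K"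
  shows "absv (riemann_sum q F N - q ^ 2 * w * riemann_sum (inverse q) G N - F 0 * (1 + q))
           \<le> \<rho> ^ N"
proof -
  define P where "P = p ^ N"
  have q1: "absv q = 1" using absv_eq_1_of_close[OF q] .
  have "F 1 = 0" unfolding F_def using \<open>M \<ge> 1\<close> by (simp add: qint_eq_sum)
  have F: "padic_regular F" unfolding F_def
    by (intro padic_regular_mult padic_regular_power padic_regular_one_minus
        padic_regular_power_base padic_regular_qint u w)
  have "absv (q ^ P * (F (0 + p ^ N * 1) - F 0)) \<le> \<rho> ^ N"
    using padic_regularD[OF F, of 0 N 1] by (simp add: absv_mult absv_power q1)
  moreover have "absv (q ^ Suc P * (F (1 + p ^ N * 1) - F 1)) \<le> \<rho> ^ N"
    using padic_regularD[OF F, of 1 N 1] by (simp add: absv_mult absv_power q1 del: power_Suc)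
  moreover have "absv (\<Sum>\<eta><P. (- q) ^ (\<eta> + 2) * (F (\<eta> + 2) - w * G (P - Suc \<eta>))) \<le> \<rho> ^ N"
  proof (rule absv_sum_le)
    fix \<eta> assume "\<eta> \<in> {..<P}"
    hence "P - Suc \<eta> + (\<eta> + 2) = p ^ N + 1" unfolding P_def by simp
    from integrand_reflect_close[OF u w this, of K M]
    have "absv (F (\<eta> + 2) - w * G (P - Suc \<eta>)) \<le> \<rho> ^ N"
      unfolding F_def G_def by (simp add: mult_ac)
    thus "absv ((- q) ^ (\<eta> + 2) * (F (\<eta> + 2) - w * G (P - Suc \<eta>))) \<le> \<rho> ^ N"
      by (simp add: absv_mult absv_power q1)
  qed (simp add: rho_nonneg)
  ultimately have "absv (qint (- q) P
      * (riemann_sum q F N - q ^ 2 * w * riemann_sum (inverse q) G N - F 0 * (1 + q))) \<le> \<rho> ^ N"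
    unfolding riemann_sum_reflect_identity[where F=F and G=G and N=N and w=w, OF q \<open>F 1 = 0\<close>,
        folded P_def]
    using \<open>F 1 = 0\<close> by (simp add: P_def absv_add_le absv_diff_le)
  thus ?thesis using qint_neg_p_power(2)[OF q, of N] by (simp add: P_def absv_mult)
qed

lemma ferm_int_symmetry:
  fixes K M :: nat
  assumes q: "absv (q - 1) \<le> \<rho>" and u: "absv (u - 1) \<le> \<rho>" and w: "absv (w - 1) \<le> \<rho>"
    and "M \<ge> 1"
  defines "F \<equiv> \<lambda>\<xi>. w ^ \<xi> * qint u \<xi> ^ K * (1 - qint u \<xi>) ^ M"
    and "G \<equiv> \<lambda>\<xi>. inverse w ^ \<xi> * qint (inverse u) \<xi> ^ M * (1 - qint (inverse u) \<xi>) ^ K"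
  shows "ferm_int absv p q F = F 0 * (1 + q) + q ^ 2 * w * ferm_int absv p (inverse q) G"
proof -
  have F: "padic_regular F" unfolding F_def
    by (intro padic_regular_mult padic_regular_power padic_regular_one_minus
        padic_regular_power_base padic_regular_qint u w)
  have G: "padic_regular G" unfolding G_def
    by (intro padic_regular_mult padic_regular_power padic_regular_one_minus
        padic_regular_power_base padic_regular_qint close_inverse u w)
  have "absv (q ^ 2 * w) = 1"
    using absv_eq_1_of_close[OF q] absv_eq_1_of_close[OF w] by (simp add: absv_mult absv_power)
  have "absv (ferm_int absv p q F - (F 0 * (1 + q) + q ^ 2 * w * ferm_int absv p (inverse q) G))
      \<le> \<rho> ^ N" for N
  proof -
    let ?S = "riemann_sum q F N" and ?T = "riemann_sum (inverse q) G N"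
    have split: "ferm_int absv p q F - (F 0 * (1 + q) + q ^ 2 * w * ferm_int absv p (inverse q) G)
        = (ferm_int absv p q F - ?S) + (?S - q ^ 2 * w * ?T - F 0 * (1 + q))
          + q ^ 2 * w * (?T - ferm_int absv p (inverse q) G)"
      by (simp add: algebra_simps)
    have "absv (ferm_int absv p q F - ?S) \<le> \<rho> ^ N"
      using riemann_sum_ferm_int_le[OF F q] by (simp add: absv_minus_commute)
    moreover have "absv (?S - q ^ 2 * w * ?T - F 0 * (1 + q)) \<le> \<rho> ^ N"
      unfolding F_def G_def using q u w \<open>M \<ge> 1\<close> by (rule riemann_sum_symmetry)
    moreover have "absv (q ^ 2 * w * (?T - ferm_int absv p (inverse q) G)) \<le> \<rho> ^ N"
      using riemann_sum_ferm_int_le[OF G close_inverse[OF q]] \<open>absv (q ^ 2 * w) = 1\<close>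
      by (simp add: absv_mult)
    ultimately show ?thesis unfolding split by (intro absv_add_le)
  qed
  hence "ferm_int absv p q F - (F 0 * (1 + q) + q ^ 2 * w * ferm_int absv p (inverse q) G) = 0"
    by (rule eq_0_of_absv_le_rho_power)
  thus ?thesis by simp
qed

lemma ferm_int_binomial_expand:
  assumes b: "absv (b - 1) \<le> \<rho>" and a: "absv (a - 1) \<le> \<rho>" and v: "absv (v - 1) \<le> \<rho>"
  shows "ferm_int absv p b (\<lambda>\<xi>. v ^ \<xi> * qint a \<xi> ^ K * (1 - qint a \<xi>) ^ M)
       = (\<Sum>l=0..M. of_nat (M choose l) * (-1) ^ l * ferm_int absv p b (\<lambda>\<xi>. v ^ \<xi> * qint a \<xi> ^ (l + K)))"
proof -
  have expand: "(\<lambda>\<xi>. v ^ \<xi> * qint a \<xi> ^ K * (1 - qint a \<xi>) ^ M)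
      = (\<lambda>\<xi>. \<Sum>l=0..M. of_nat (M choose l) * (-1) ^ l * (v ^ \<xi> * qint a \<xi> ^ (l + K)))"
    by (simp add: power_mult_one_minus_power_expand sum_distrib_left mult_ac)
  show ?thesis unfolding expand
    by (intro ferm_int_sum padic_regular_mult padic_regular_power padic_regular_power_base
        padic_regular_qint b a v) (simp add: absv_mult absv_power absv_of_nat_le_1)
qed

lemma ferm_int_binomial_expand_reflected:
  assumes b: "absv (b - 1) \<le> \<rho>" and a: "absv (a - 1) \<le> \<rho>" and v: "absv (v - 1) \<le> \<rho>"
  shows "ferm_int absv p b (\<lambda>\<xi>. v ^ \<xi> * qint a \<xi> ^ M * (1 - qint a \<xi>) ^ K)
       = (\<Sum>l=0..K. of_nat (K choose l) * (-1) ^ (K + l)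
            * ferm_int absv p b (\<lambda>\<xi>. v ^ \<xi> * qint a \<xi> ^ (M + K - l)))"
proof -
  have expand: "(\<lambda>\<xi>. v ^ \<xi> * qint a \<xi> ^ M * (1 - qint a \<xi>) ^ K)
      = (\<lambda>\<xi>. \<Sum>l=0..K. of_nat (K choose l) * (-1) ^ (K + l) * (v ^ \<xi> * qint a \<xi> ^ (M + K - l)))"
    by (simp add: power_mult_one_minus_power_expand_reflected sum_distrib_left mult_ac)
  show ?thesis unfolding expand
    by (intro ferm_int_sum padic_regular_mult padic_regular_power padic_regular_power_base
        padic_regular_qint b a v) (simp add: absv_mult absv_power absv_of_nat_le_1)
qed

theorem genocchi_binomial_identity:
  fixes q :: 'a and \<alpha> h K M :: nat
  assumes q: "absv (q - 1) \<le> \<rho>" and "h \<ge> 1" and "M \<ge> 1"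
  shows "(\<Sum>l=0..M. of_nat (M choose l) * (-1) ^ l
            * genocchi absv p \<alpha> h q (l + K + 1) / of_nat (l + K + 1))
       = (if K = 0 then
            (1 + q) + q ^ (h + 1) * genocchi absv p \<alpha> h (inverse q) (M + K + 1) / of_nat (M + K + 1)
          else
            (\<Sum>l=0..K. of_nat (K choose l) * (-1) ^ (K + l) *
               ((1 + q) + q ^ (h + 1) * genocchi absv p \<alpha> h (inverse q) (M + K - l + 1)
                           / of_nat (M + K - l + 1))))"
    (is "?L = ?R")
proof -
  define u where "u = q ^ \<alpha>"
  define w where "w = q ^ (h - 1)"
  have u: "absv (u - 1) \<le> \<rho>" and w: "absv (w - 1) \<le> \<rho>"
    unfolding u_def w_def using close_power[OF q] by blast+
  define F where "F = (\<lambda>\<xi>. w ^ \<xi> * qint u \<xi> ^ K * (1 - qint u \<xi>) ^ M)"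
  define G where "G = (\<lambda>\<xi>. inverse w ^ \<xi> * qint (inverse u) \<xi> ^ M * (1 - qint (inverse u) \<xi>) ^ K)"
  have genocchi_q: "genocchi absv p \<alpha> h q (n + 1) / of_nat (n + 1)
      = ferm_int absv p q (\<lambda>\<xi>. w ^ \<xi> * qint u \<xi> ^ n)" for n
    using genocchi_Suc_divide[of absv p \<alpha> h q n] by (simp add: u_def w_def)
  have genocchi_inverse_q: "genocchi absv p \<alpha> h (inverse q) (n + 1) / of_nat (n + 1)
      = ferm_int absv p (inverse q) (\<lambda>\<xi>. inverse w ^ \<xi> * qint (inverse u) \<xi> ^ n)" for n
    using genocchi_Suc_divide[of absv p \<alpha> h "inverse q" n] by (simp add: u_def w_def power_inverse)
  have L: "?L = ferm_int absv p q F"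
    unfolding F_def ferm_int_binomial_expand[OF q u w]
    by (intro sum.cong refl) (simp add: genocchi_q[symmetric] mult.assoc)
  have R: "?R = F 0 * (1 + q) + q ^ (h + 1) * ferm_int absv p (inverse q) G"
  proof (cases "K = 0")
    case True
    thus ?thesis by (simp add: F_def G_def genocchi_inverse_q[symmetric])
  next
    case False
    define c where "c l = (of_nat (K choose l) * (-1) ^ (K + l) :: 'a)" for l
    define I where "I l = ferm_int absv p (inverse q)
      (\<lambda>\<xi>. inverse w ^ \<xi> * qint (inverse u) \<xi> ^ (M + K - l))" for l
    have summand: "of_nat (K choose l) * (-1) ^ (K + l) * ((1 + q) + q ^ (h + 1)
          * genocchi absv p \<alpha> h (inverse q) (M + K - l + 1) / of_nat (M + K - l + 1))
        = c l * (1 + q) + q ^ (h + 1) * (c l * I l)" for l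
      unfolding c_def I_def
      by (simp only: times_divide_eq_right[symmetric] genocchi_inverse_q) (simp add: algebra_simps)
    have "?R = (\<Sum>l=0..K. c l * (1 + q) + q ^ (h + 1) * (c l * I l))"
      using False by (simp only: summand if_False)
    also have "\<dots> = (\<Sum>l=0..K. c l) * (1 + q) + q ^ (h + 1) * (\<Sum>l=0..K. c l * I l)"
      by (simp add: sum.distrib sum_distrib_left sum_distrib_right)
    also have "(\<Sum>l=0..K. c l * I l) = ferm_int absv p (inverse q) G"
      unfolding G_def c_def I_def ferm_int_binomial_expand_reflected[OF close_inverse[OF q]
          close_inverse[OF u] close_inverse[OF w]] ..
    finally have "?R = (\<Sum>l=0..K. c l) * (1 + q) + q ^ (h + 1) * ferm_int absv p (inverse q) G" .
    thus ?thesis using False by (simp add: F_def c_def sum_alternating_binomial)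
  qed
  have "q ^ (h + 1) = q ^ 2 * w" unfolding w_def using \<open>h \<ge> 1\<close>
    by (simp add: power_add[symmetric])
  thus ?thesis unfolding L R F_def G_def using ferm_int_symmetry[OF q u w \<open>M \<ge> 1\<close>]
    by (simp only:)
qed

end

theorem mainTheorem8:
  fixes absv :: "'a::field_char_0 \<Rightarrow> real" and p :: nat and q :: 'a
    and \<alpha> h s k :: nat and n :: "nat \<Rightarrow> nat"
  assumes "prime p" and "odd p" and "Cp_field absv p"
    and "absv (q - 1) < 1" and "h \<ge> 1" and "s \<ge> 2"
    and "(\<Sum>d=1..s. n d) > s * k"
  shows "(\<Sum>l=0..(\<Sum>d=1..s. n d) - s * k.
            of_nat (((\<Sum>d=1..s. n d) - s * k) choose l) * (-1) ^ l
            * genocchi absv p \<alpha> h q (l + s * k + 1) / of_nat (l + s * k + 1))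
       = (if k = 0 then
            (1 + q) + q ^ (h + 1) * genocchi absv p \<alpha> h (inverse q) ((\<Sum>d=1..s. n d) + 1)
                        / of_nat ((\<Sum>d=1..s. n d) + 1)
          else
            (\<Sum>l=0..s * k. of_nat ((s * k) choose l) * (-1) ^ (s * k + l) *
               ((1 + q) + q ^ (h + 1) * genocchi absv p \<alpha> h (inverse q) ((\<Sum>d=1..s. n d) - l + 1)
                           / of_nat ((\<Sum>d=1..s. n d) - l + 1))))"
proof -
  define \<rho> where "\<rho> = max (1 / real p) (absv (q - 1))"
  have "1 < p" using \<open>prime p\<close> by (rule prime_gt_1_nat)
  interpret padic_scale absv p \<rho>
    using assms(2-4) \<open>1 < p\<close> unfolding Cp_field_def \<rho>_def by unfold_locales auto
  have "absv (q - 1) \<le> \<rho>" unfolding \<rho>_def by simp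
  moreover have "(\<Sum>d=1..s. n d) - s * k + s * k = (\<Sum>d=1..s. n d)" and "s * k = 0 \<longleftrightarrow> k = 0"
    using assms(6,7) by simp_all
  ultimately show ?thesis
    using genocchi_binomial_identity[where K = "s * k" and M = "(\<Sum>d=1..s. n d) - s * k"]
      assms(5,7) by simp
qed

end
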